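(* Let $A\to M$ be a vector bundle of rank at least $n$. Let $\widehat{\xi}^1,\dots,\widehat{\xi}^n\in\Gamma(A^* )$ be linearly independent over $C^\infty(M)$ and let $\widehat{X}_1,\dots,\widehat{X}_n$ be covariant differential operators on $A$ with symbols $\widehat{x}_1,\dots,\widehat{x}_n\in\Gamma(TM)$. Define $a_A(y)=\sum_i\langle y,\widehat{\xi}^i\rangle\widehat{x}_i$ and $$[y,z]_A=\sum_{i=1}^n\Big(\langle y,\widehat{\xi}^i\rangle\widehat{X}_i(z)-\langle z,\widehat{\xi}^i\rangle\widehat{X}_i(y)\Big),\qquad y,z\in\Gamma(A).$$ Suppose there are $a_{ik}^j\in C^\infty(M)$ such that for all $i,j$ $$\widehat{X}_i(\widehat{\xi}^j)=\sum_k a_{ik}^j\widehat{\xi}^k,\qquad [\widehat{x}_i,\widehat{x}_j]=\sum_k\big(a_{ji}^k-a_{ij}^k\big)\widehat{x}_k .$$ Then $(A,[\cdot,\cdot]_A,a_A)$ is a dull algebroid.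
   Context: A covariant differential operator on $A$ is an $\mathbb{R}$-linear map $\widehat{X}:\Gamma(A)\to\Gamma(A)$ with a vector field $\widehat{x}$ (its symbol) such that $\widehat{X}(fy)=f\widehat{X}(y)+\widehat{x}(f)y$; it acts on $\Gamma(A^* )$ by $\langle\widehat{X}(\xi),y\rangle=\widehat{x}\langle\xi,y\rangle-\langle\xi,\widehat{X}(y)\rangle$. A dull algebroid is a triple $(A,[\cdot,\cdot],a_A)$ with $a_A:A\to TM$ a bundle map and $[\cdot,\cdot]$ a skew-symmetric $\mathbb{R}$-bilinear bracket on $\Gamma(A)$ satisfying $[x,fy]=f[x,y]+a_A(x)(f)y$ and $a_A([x,y])=[a_A(x),a_A(y)]$. *)

theory Defs
  imports Main "HOL.Real_Vector_Spaces"
begin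

text \<open>Points of M are the elements of type 'm.  C is the algebra of smooth functions
  (a unital subalgebra of the real-valued functions on M).  Sections of A are
  maps 'm \<Rightarrow> 'v into a fixed real vector space (A viewed inside M \<times> V); the set G
  of smooth sections is a C-module.  Sections of A* are the C-linear maps G \<rightarrow> C
  (the pairing is application).  Vector fields are derivations of C.\<close>

definition smooth_algebra :: "('m \<Rightarrow> real) set \<Rightarrow> bool" where
  "smooth_algebra C \<longleftrightarrow> (\<forall>c. (\<lambda>_. c) \<in> C) \<and>
     (\<forall>f\<in>C. \<forall>g\<in>C. (\<lambda>p. f p + g p) \<in> C \<and> (\<lambda>p. f p * g p) \<in> C)"

definition smul :: "('m \<Rightarrow> real) \<Rightarrow> ('m \<Rightarrow> 'v::real_vector) \<Rightarrow> ('m \<Rightarrow> 'v)" where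
  "smul f y = (\<lambda>p. f p *\<^sub>R y p)"

definition section_module :: "('m \<Rightarrow> real) set \<Rightarrow> ('m \<Rightarrow> 'v::real_vector) set \<Rightarrow> bool" where
  "section_module C G \<longleftrightarrow> (\<lambda>_. 0) \<in> G \<and> (\<forall>y\<in>G. \<forall>z\<in>G. (\<lambda>p. y p + z p) \<in> G) \<and>
     (\<forall>f\<in>C. \<forall>y\<in>G. smul f y \<in> G)"

definition dual_section ::
  "('m \<Rightarrow> real) set \<Rightarrow> ('m \<Rightarrow> 'v::real_vector) set \<Rightarrow> (('m \<Rightarrow> 'v) \<Rightarrow> ('m \<Rightarrow> real)) \<Rightarrow> bool" where
  "dual_section C G \<xi> \<longleftrightarrow> (\<forall>y\<in>G. \<xi> y \<in> C) \<and>
     (\<forall>f\<in>C. \<forall>y\<in>G. \<forall>z\<in>G. \<xi> (\<lambda>p. f p *\<^sub>R y p + z p) = (\<lambda>p. f p * \<xi> y p + \<xi> z p))"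

definition vector_field :: "('m \<Rightarrow> real) set \<Rightarrow> (('m \<Rightarrow> real) \<Rightarrow> ('m \<Rightarrow> real)) \<Rightarrow> bool" where
  "vector_field C x \<longleftrightarrow> (\<forall>f\<in>C. x f \<in> C) \<and>
     (\<forall>c::real. \<forall>f\<in>C. \<forall>g\<in>C. x (\<lambda>p. c * f p + g p) = (\<lambda>p. c * x f p + x g p)) \<and>
     (\<forall>f\<in>C. \<forall>g\<in>C. x (\<lambda>p. f p * g p) = (\<lambda>p. f p * x g p + g p * x f p))"

definition lie_bracket ::
  "(('m \<Rightarrow> real) \<Rightarrow> ('m \<Rightarrow> real)) \<Rightarrow> (('m \<Rightarrow> real) \<Rightarrow> ('m \<Rightarrow> real)) \<Rightarrow> (('m \<Rightarrow> real) \<Rightarrow> ('m \<Rightarrow> real))" where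
  "lie_bracket x y = (\<lambda>f p. x (y f) p - y (x f) p)"

definition vf_eq ::
  "('m \<Rightarrow> real) set \<Rightarrow> (('m \<Rightarrow> real) \<Rightarrow> ('m \<Rightarrow> real)) \<Rightarrow> (('m \<Rightarrow> real) \<Rightarrow> ('m \<Rightarrow> real)) \<Rightarrow> bool" where
  "vf_eq C x y \<longleftrightarrow> (\<forall>f\<in>C. x f = y f)"

definition covariant_diff_op ::
  "('m \<Rightarrow> real) set \<Rightarrow> ('m \<Rightarrow> 'v::real_vector) set \<Rightarrow> (('m \<Rightarrow> 'v) \<Rightarrow> ('m \<Rightarrow> 'v))
   \<Rightarrow> (('m \<Rightarrow> real) \<Rightarrow> ('m \<Rightarrow> real)) \<Rightarrow> bool" where
  "covariant_diff_op C G X xh \<longleftrightarrow> vector_field C xh \<and> (\<forall>y\<in>G. X y \<in> G) \<and>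
     (\<forall>c::real. \<forall>y\<in>G. \<forall>z\<in>G. X (\<lambda>p. c *\<^sub>R y p + z p) = (\<lambda>p. c *\<^sub>R X y p + X z p)) \<and>
     (\<forall>f\<in>C. \<forall>y\<in>G. X (smul f y) = (\<lambda>p. f p *\<^sub>R X y p + xh f p *\<^sub>R y p))"

definition dual_action ::
  "(('m \<Rightarrow> 'v::real_vector) \<Rightarrow> ('m \<Rightarrow> 'v)) \<Rightarrow> (('m \<Rightarrow> real) \<Rightarrow> ('m \<Rightarrow> real))
   \<Rightarrow> (('m \<Rightarrow> 'v) \<Rightarrow> ('m \<Rightarrow> real)) \<Rightarrow> (('m \<Rightarrow> 'v) \<Rightarrow> ('m \<Rightarrow> real))" where
  "dual_action X xh \<xi> = (\<lambda>y p. xh (\<xi> y) p - \<xi> (X y) p)"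

definition lin_indep_dual ::
  "('m \<Rightarrow> real) set \<Rightarrow> ('m \<Rightarrow> 'v::real_vector) set \<Rightarrow> nat \<Rightarrow> (nat \<Rightarrow> ('m \<Rightarrow> 'v) \<Rightarrow> ('m \<Rightarrow> real)) \<Rightarrow> bool" where
  "lin_indep_dual C G n \<xi> \<longleftrightarrow>
     (\<forall>c. (\<forall>i<n. c i \<in> C) \<longrightarrow> (\<forall>y\<in>G. (\<lambda>p. \<Sum>i<n. c i p * \<xi> i y p) = (\<lambda>_. 0))
        \<longrightarrow> (\<forall>i<n. c i = (\<lambda>_. 0)))"

definition dull_algebroid ::
  "('m \<Rightarrow> real) set \<Rightarrow> ('m \<Rightarrow> 'v::real_vector) set \<Rightarrow> (('m \<Rightarrow> 'v) \<Rightarrow> ('m \<Rightarrow> 'v) \<Rightarrow> ('m \<Rightarrow> 'v))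
   \<Rightarrow> (('m \<Rightarrow> 'v) \<Rightarrow> (('m \<Rightarrow> real) \<Rightarrow> ('m \<Rightarrow> real))) \<Rightarrow> bool" where
  "dull_algebroid C G br anc \<longleftrightarrow>
     (\<forall>y\<in>G. \<forall>z\<in>G. br y z \<in> G) \<and>
     (\<forall>y\<in>G. \<forall>z\<in>G. br y z = (\<lambda>p. - br z y p)) \<and>
     (\<forall>c::real. \<forall>y\<in>G. \<forall>y'\<in>G. \<forall>z\<in>G.
        br (\<lambda>p. c *\<^sub>R y p + y' p) z = (\<lambda>p. c *\<^sub>R br y z p + br y' z p)) \<and>
     (\<forall>c::real. \<forall>y\<in>G. \<forall>z\<in>G. \<forall>z'\<in>G.
        br y (\<lambda>p. c *\<^sub>R z p + z' p) = (\<lambda>p. c *\<^sub>R br y z p + br y z' p)) \<and>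
     (\<forall>y\<in>G. vector_field C (anc y)) \<and>
     (\<forall>f\<in>C. \<forall>y\<in>G. \<forall>z\<in>G.
        vf_eq C (anc (\<lambda>p. f p *\<^sub>R y p + z p)) (\<lambda>g p. f p * anc y g p + anc z g p)) \<and>
     (\<forall>f\<in>C. \<forall>y\<in>G. \<forall>z\<in>G.
        br y (smul f z) = (\<lambda>p. f p *\<^sub>R br y z p + anc y f p *\<^sub>R z p)) \<and>
     (\<forall>y\<in>G. \<forall>z\<in>G. vf_eq C (anc (br y z)) (lie_bracket (anc y) (anc z)))"

end

theory Submission
  imports Defs
begin

(*
  Write y^i for the coordinate <y, \<xi>^i>.  Skew-symmetry of the bracket is built in,
  R-bilinearity comes from the linearity of the \<xi>^i and X_i, and the Leibniz rule from
  X_i(f z) = f X_i(z) + x_i(f) z together with <f z, \<xi>^i> = f z^i.  For the anchor to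
  preserve brackets, evaluate both sides on a test function g.  The rule
  X_i(\<xi>^j) = \<Sum>_k a_ik^j \<xi>^k gives the coordinates
    [y,z]^j = a(y)(z^j) - a(z)(y^j) + \<Sum>_i,k (z^i y^k - y^i z^k) a_ik^j,
  while expanding [a(y), a(z)] g with the Leibniz rule of the x_i leaves, besides the same
  first-order terms, the sum \<Sum>_i,j y^i z^j [x_i, x_j] g.  After reindexing, the
  hypothesis on [x_i, x_j] identifies the two remaining sums.
*)

lemma smooth_algebra_const: "smooth_algebra C \<Longrightarrow> (\<lambda>_. c) \<in> C"
  by (simp add: smooth_algebra_def)

lemma smooth_algebra_add: "smooth_algebra C \<Longrightarrow> f \<in> C \<Longrightarrow> g \<in> C \<Longrightarrow> (\<lambda>p. f p + g p) \<in> C"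
  by (simp add: smooth_algebra_def)

lemma smooth_algebra_mult: "smooth_algebra C \<Longrightarrow> f \<in> C \<Longrightarrow> g \<in> C \<Longrightarrow> (\<lambda>p. f p * g p) \<in> C"
  by (simp add: smooth_algebra_def)

lemma smooth_algebra_sum:
  assumes "smooth_algebra C" "finite I" "\<And>i. i \<in> I \<Longrightarrow> f i \<in> C"
  shows "(\<lambda>p. \<Sum>i\<in>I. f i p) \<in> C"
  using assms(2,3)
proof (induction I rule: finite_induct)
  case empty
  then show ?case using smooth_algebra_const[OF assms(1), of 0] by simp
next
  case (insert j I)
  then show ?case using smooth_algebra_add[OF assms(1), of "f j" "\<lambda>p. \<Sum>i\<in>I. f i p"] by simp
qed

lemma section_module_zero: "section_module C G \<Longrightarrow> (\<lambda>_. 0) \<in> G"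
  by (simp add: section_module_def)

lemma section_module_add: "section_module C G \<Longrightarrow> y \<in> G \<Longrightarrow> z \<in> G \<Longrightarrow> (\<lambda>p. y p + z p) \<in> G"
  by (simp add: section_module_def)

lemma section_module_scaleR: "section_module C G \<Longrightarrow> f \<in> C \<Longrightarrow> y \<in> G \<Longrightarrow> (\<lambda>p. f p *\<^sub>R y p) \<in> G"
  by (simp add: section_module_def smul_def)

lemma section_module_diff:
  assumes "smooth_algebra C" "section_module C G" "y \<in> G" "z \<in> G"
  shows "(\<lambda>p. y p - z p) \<in> G"
  using section_module_add[OF assms(2,3) section_module_scaleR[OF assms(2)
      smooth_algebra_const[OF assms(1), of "-1"] assms(4)]]
  by simp

lemma section_module_sum:
  assumes "section_module C G" "finite I" "\<And>i. i \<in> I \<Longrightarrow> y i \<in> G"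
  shows "(\<lambda>p. \<Sum>i\<in>I. y i p) \<in> G"
  using assms(2,3)
proof (induction I rule: finite_induct)
  case empty
  then show ?case using section_module_zero[OF assms(1)] by simp
next
  case (insert j I)
  then show ?case using section_module_add[OF assms(1), of "y j" "\<lambda>p. \<Sum>i\<in>I. y i p"] by simp
qed

lemma dual_section_mem: "dual_section C G \<xi> \<Longrightarrow> y \<in> G \<Longrightarrow> \<xi> y \<in> C"
  by (simp add: dual_section_def)

lemma dual_section_scaleR_add:
  "dual_section C G \<xi> \<Longrightarrow> f \<in> C \<Longrightarrow> y \<in> G \<Longrightarrow> z \<in> G \<Longrightarrow>
    \<xi> (\<lambda>p. f p *\<^sub>R y p + z p) = (\<lambda>p. f p * \<xi> y p + \<xi> z p)"
  by (simp add: dual_section_def)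

lemma dual_section_add:
  assumes "smooth_algebra C" "dual_section C G \<xi>" "y \<in> G" "z \<in> G"
  shows "\<xi> (\<lambda>p. y p + z p) = (\<lambda>p. \<xi> y p + \<xi> z p)"
  using dual_section_scaleR_add[OF assms(2) smooth_algebra_const[OF assms(1), of 1] assms(3,4)]
  by simp

lemma dual_section_diff:
  assumes "smooth_algebra C" "dual_section C G \<xi>" "y \<in> G" "z \<in> G"
  shows "\<xi> (\<lambda>p. y p - z p) = (\<lambda>p. \<xi> y p - \<xi> z p)"
  using dual_section_scaleR_add[OF assms(2) smooth_algebra_const[OF assms(1), of "-1"] assms(4,3)]
  by (simp add: algebra_simps)

lemma dual_section_zero:
  assumes "smooth_algebra C" "section_module C G" "dual_section C G \<xi>"
  shows "\<xi> (\<lambda>_. 0) = (\<lambda>_. 0)"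
  using dual_section_add[OF assms(1,3) section_module_zero[OF assms(2)] section_module_zero[OF assms(2)]]
  by (simp add: fun_eq_iff)

lemma dual_section_scaleR:
  assumes "smooth_algebra C" "section_module C G" "dual_section C G \<xi>" "f \<in> C" "y \<in> G"
  shows "\<xi> (\<lambda>p. f p *\<^sub>R y p) = (\<lambda>p. f p * \<xi> y p)"
  using dual_section_scaleR_add[OF assms(3-5) section_module_zero[OF assms(2)]]
    dual_section_zero[OF assms(1-3)]
  by simp

lemma dual_section_sum:
  assumes "smooth_algebra C" "section_module C G" "dual_section C G \<xi>"
    and "finite I" "\<And>i. i \<in> I \<Longrightarrow> y i \<in> G"
  shows "\<xi> (\<lambda>p. \<Sum>i\<in>I. y i p) = (\<lambda>p. \<Sum>i\<in>I. \<xi> (y i) p)"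
  using assms(4,5)
proof (induction I rule: finite_induct)
  case empty
  then show ?case using dual_section_zero[OF assms(1-3)] by simp
next
  case (insert j I)
  have "(\<lambda>p. \<Sum>i\<in>I. y i p) \<in> G"
    using insert.prems by (intro section_module_sum[OF assms(2) insert.hyps(1)]) auto
  moreover have "\<xi> (\<lambda>p. \<Sum>i\<in>I. y i p) = (\<lambda>p. \<Sum>i\<in>I. \<xi> (y i) p)"
    using insert.prems by (intro insert.IH) auto
  ultimately show ?case
    using insert.hyps insert.prems dual_section_add[OF assms(1,3), of "y j" "\<lambda>p. \<Sum>i\<in>I. y i p"]
    by simp
qed

lemma vector_field_mem: "vector_field C x \<Longrightarrow> f \<in> C \<Longrightarrow> x f \<in> C"
  by (simp add: vector_field_def)

lemma vector_field_linear:
  "vector_field C x \<Longrightarrow> f \<in> C \<Longrightarrow> g \<in> C \<Longrightarrow> x (\<lambda>p. c * f p + g p) = (\<lambda>p. c * x f p + x g p)"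
  by (simp add: vector_field_def)

lemma vector_field_mult:
  "vector_field C x \<Longrightarrow> f \<in> C \<Longrightarrow> g \<in> C \<Longrightarrow> x (\<lambda>p. f p * g p) = (\<lambda>p. f p * x g p + g p * x f p)"
  by (simp add: vector_field_def)

lemma vector_field_add:
  "vector_field C x \<Longrightarrow> f \<in> C \<Longrightarrow> g \<in> C \<Longrightarrow> x (\<lambda>p. f p + g p) = (\<lambda>p. x f p + x g p)"
  using vector_field_linear[of C x f g 1] by simp

lemma vector_field_zero:
  assumes "smooth_algebra C" "vector_field C x"
  shows "x (\<lambda>_. 0) = (\<lambda>_. 0)"
  using vector_field_add[OF assms(2) smooth_algebra_const[OF assms(1)] smooth_algebra_const[OF assms(1)], of 0 0]
  by (simp add: fun_eq_iff)

lemma vector_field_sum: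
  assumes "smooth_algebra C" "vector_field C x" "finite I" "\<And>i. i \<in> I \<Longrightarrow> f i \<in> C"
  shows "x (\<lambda>p. \<Sum>i\<in>I. f i p) = (\<lambda>p. \<Sum>i\<in>I. x (f i) p)"
  using assms(3,4)
proof (induction I rule: finite_induct)
  case empty
  then show ?case using vector_field_zero[OF assms(1,2)] by simp
next
  case (insert j I)
  have "(\<lambda>p. \<Sum>i\<in>I. f i p) \<in> C"
    using insert.prems by (intro smooth_algebra_sum[OF assms(1) insert.hyps(1)]) auto
  then have "x (\<lambda>p. f j p + (\<Sum>i\<in>I. f i p)) = (\<lambda>p. x (f j) p + x (\<lambda>p. \<Sum>i\<in>I. f i p) p)"
    using insert.prems by (intro vector_field_add[OF assms(2)]) auto
  moreover have "x (\<lambda>p. \<Sum>i\<in>I. f i p) = (\<lambda>p. \<Sum>i\<in>I. x (f i) p)"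
    using insert.prems by (intro insert.IH) auto
  ultimately show ?case
    using insert.hyps by simp
qed

lemma vector_field_combination:
  assumes C: "smooth_algebra C" and "finite I"
    and x: "\<And>i. i \<in> I \<Longrightarrow> vector_field C (x i)" and c: "\<And>i. i \<in> I \<Longrightarrow> c i \<in> C"
  shows "vector_field C (\<lambda>f p. \<Sum>i\<in>I. c i p * x i f p)"
  unfolding vector_field_def
proof (intro conjI ballI allI)
  fix f assume "f \<in> C"
  then show "(\<lambda>p. \<Sum>i\<in>I. c i p * x i f p) \<in> C"
    using assms vector_field_mem[OF x] by (auto intro!: smooth_algebra_sum smooth_algebra_mult)
next
  fix r f g assume f: "f \<in> C" and g: "g \<in> C"
  have "c i p * x i (\<lambda>p. r * f p + g p) p = r * (c i p * x i f p) + c i p * x i g p"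
    if "i \<in> I" for i p
    using vector_field_linear[OF x[OF that] f g] by (simp add: algebra_simps)
  then show "(\<lambda>p. \<Sum>i\<in>I. c i p * x i (\<lambda>p. r * f p + g p) p)
      = (\<lambda>p. r * (\<Sum>i\<in>I. c i p * x i f p) + (\<Sum>i\<in>I. c i p * x i g p))"
    by (simp add: sum.distrib sum_distrib_left)
next
  fix f g assume f: "f \<in> C" and g: "g \<in> C"
  have "c i p * x i (\<lambda>p. f p * g p) p = f p * (c i p * x i g p) + g p * (c i p * x i f p)"
    if "i \<in> I" for i p
    using vector_field_mult[OF x[OF that] f g] by (simp add: algebra_simps)
  then show "(\<lambda>p. \<Sum>i\<in>I. c i p * x i (\<lambda>p. f p * g p) p)
      = (\<lambda>p. f p * (\<Sum>i\<in>I. c i p * x i g p) + g p * (\<Sum>i\<in>I. c i p * x i f p))"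
    by (simp add: sum.distrib sum_distrib_left)
qed

lemma covariant_diff_op_vector_field: "covariant_diff_op C G X xh \<Longrightarrow> vector_field C xh"
  by (simp add: covariant_diff_op_def)

lemma covariant_diff_op_mem: "covariant_diff_op C G X xh \<Longrightarrow> y \<in> G \<Longrightarrow> X y \<in> G"
  by (simp add: covariant_diff_op_def)

lemma covariant_diff_op_linear:
  "covariant_diff_op C G X xh \<Longrightarrow> y \<in> G \<Longrightarrow> z \<in> G \<Longrightarrow>
    X (\<lambda>p. c *\<^sub>R y p + z p) = (\<lambda>p. c *\<^sub>R X y p + X z p)"
  by (simp add: covariant_diff_op_def)

lemma covariant_diff_op_scaleR:
  "covariant_diff_op C G X xh \<Longrightarrow> f \<in> C \<Longrightarrow> y \<in> G \<Longrightarrow>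
    X (\<lambda>p. f p *\<^sub>R y p) = (\<lambda>p. f p *\<^sub>R X y p + xh f p *\<^sub>R y p)"
  by (simp add: covariant_diff_op_def smul_def)

lemma sum_swap_reverse3: "(\<Sum>i\<in>I. \<Sum>j\<in>J. \<Sum>k\<in>K. f i j k) = (\<Sum>k\<in>K. \<Sum>j\<in>J. \<Sum>i\<in>I. f i j k)"
proof -
  have "(\<Sum>i\<in>I. \<Sum>j\<in>J. \<Sum>k\<in>K. f i j k) = (\<Sum>j\<in>J. \<Sum>i\<in>I. \<Sum>k\<in>K. f i j k)"
    by (rule sum.swap)
  also have "\<dots> = (\<Sum>j\<in>J. \<Sum>k\<in>K. \<Sum>i\<in>I. f i j k)"
    by (intro sum.cong refl sum.swap)
  also have "\<dots> = (\<Sum>k\<in>K. \<Sum>j\<in>J. \<Sum>i\<in>I. f i j k)"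
    by (rule sum.swap)
  finally show ?thesis .
qed

lemma sum_structure_constants:
  fixes Y Z H :: "'i \<Rightarrow> 'a::comm_ring" and A :: "'i \<Rightarrow> 'i \<Rightarrow> 'i \<Rightarrow> 'a"
  shows "(\<Sum>j\<in>I. (\<Sum>i\<in>I. \<Sum>k\<in>I. (Z i * Y k - Y i * Z k) * A i k j) * H j)
    = (\<Sum>i\<in>I. \<Sum>j\<in>I. Y i * Z j * (\<Sum>k\<in>I. (A j i k - A i j k) * H k))"
proof -
  have "(\<Sum>j\<in>I. (\<Sum>i\<in>I. \<Sum>k\<in>I. (Z i * Y k - Y i * Z k) * A i k j) * H j)
      = (\<Sum>j\<in>I. \<Sum>i\<in>I. \<Sum>k\<in>I. Z i * Y k * A i k j * H j)
        - (\<Sum>j\<in>I. \<Sum>i\<in>I. \<Sum>k\<in>I. Y i * Z k * A i k j * H j)"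
    by (simp add: sum_distrib_right sum_subtractf left_diff_distrib)
  also have "(\<Sum>j\<in>I. \<Sum>i\<in>I. \<Sum>k\<in>I. Z i * Y k * A i k j * H j)
      = (\<Sum>i\<in>I. \<Sum>j\<in>I. \<Sum>k\<in>I. Y i * Z j * A j i k * H k)"
    by (subst sum_swap_reverse3) (simp add: ac_simps)
  also have "(\<Sum>j\<in>I. \<Sum>i\<in>I. \<Sum>k\<in>I. Y i * Z k * A i k j * H j)
      = (\<Sum>i\<in>I. \<Sum>j\<in>I. \<Sum>k\<in>I. Y i * Z j * A i j k * H k)"
    by (subst sum.swap) (intro sum.cong refl sum.swap)
  also have "(\<Sum>i\<in>I. \<Sum>j\<in>I. \<Sum>k\<in>I. Y i * Z j * A j i k * H k)
      - (\<Sum>i\<in>I. \<Sum>j\<in>I. \<Sum>k\<in>I. Y i * Z j * A i j k * H k)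
      = (\<Sum>i\<in>I. \<Sum>j\<in>I. Y i * Z j * (\<Sum>k\<in>I. (A j i k - A i j k) * H k))"
    by (simp add: sum_distrib_left sum_subtractf left_diff_distrib right_diff_distrib ac_simps)
  finally show ?thesis .
qed

locale covariant_frame =
  fixes C :: "('m \<Rightarrow> real) set"
    and G :: "('m \<Rightarrow> 'v::real_vector) set"
    and n :: nat
    and \<xi> :: "nat \<Rightarrow> ('m \<Rightarrow> 'v) \<Rightarrow> ('m \<Rightarrow> real)"
    and X :: "nat \<Rightarrow> ('m \<Rightarrow> 'v) \<Rightarrow> ('m \<Rightarrow> 'v)"
    and xh :: "nat \<Rightarrow> ('m \<Rightarrow> real) \<Rightarrow> ('m \<Rightarrow> real)"
  assumes smooth_algebra: "smooth_algebra C"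
    and section_module: "section_module C G"
    and dual_section: "i < n \<Longrightarrow> dual_section C G (\<xi> i)"
    and covariant_diff_op: "i < n \<Longrightarrow> covariant_diff_op C G (X i) (xh i)"
begin

definition anchor :: "('m \<Rightarrow> 'v) \<Rightarrow> ('m \<Rightarrow> real) \<Rightarrow> ('m \<Rightarrow> real)" where
  "anchor y f p = (\<Sum>i<n. \<xi> i y p * xh i f p)"

definition bracket :: "('m \<Rightarrow> 'v) \<Rightarrow> ('m \<Rightarrow> 'v) \<Rightarrow> ('m \<Rightarrow> 'v)" where
  "bracket y z p = (\<Sum>i<n. \<xi> i y p *\<^sub>R X i z p - \<xi> i z p *\<^sub>R X i y p)"

lemma coordinate_mem: "i < n \<Longrightarrow> y \<in> G \<Longrightarrow> \<xi> i y \<in> C"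
  using dual_section dual_section_mem by blast

lemma operator_mem: "i < n \<Longrightarrow> y \<in> G \<Longrightarrow> X i y \<in> G"
  using covariant_diff_op covariant_diff_op_mem by blast

lemma symbol_vector_field: "i < n \<Longrightarrow> vector_field C (xh i)"
  using covariant_diff_op covariant_diff_op_vector_field by blast

lemma symbol_mem: "i < n \<Longrightarrow> f \<in> C \<Longrightarrow> xh i f \<in> C"
  using symbol_vector_field vector_field_mem by blast

lemma bracket_mem:
  assumes "y \<in> G" "z \<in> G"
  shows "bracket y z \<in> G"
  unfolding bracket_def[abs_def]
  using assms coordinate_mem operator_mem
  by (intro section_module_sum[OF section_module] section_module_diff[OF smooth_algebra section_module]
      section_module_scaleR[OF section_module]) auto

lemma bracket_skew: "bracket y z = (\<lambda>p. - bracket z y p)"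
  by (simp add: bracket_def fun_eq_iff sum_subtractf)

lemma bracket_scaleR_add_left:
  assumes y: "y \<in> G" and y': "y' \<in> G" and z: "z \<in> G"
  shows "bracket (\<lambda>p. c *\<^sub>R y p + y' p) z = (\<lambda>p. c *\<^sub>R bracket y z p + bracket y' z p)"
proof -
  have "\<xi> i (\<lambda>p. c *\<^sub>R y p + y' p) p *\<^sub>R X i z p - \<xi> i z p *\<^sub>R X i (\<lambda>p. c *\<^sub>R y p + y' p) p
      = c *\<^sub>R (\<xi> i y p *\<^sub>R X i z p - \<xi> i z p *\<^sub>R X i y p) + (\<xi> i y' p *\<^sub>R X i z p - \<xi> i z p *\<^sub>R X i y' p)"
    if "i < n" for i p
    using dual_section_scaleR_add[OF dual_section[OF that] smooth_algebra_const[OF smooth_algebra, of c] y y']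
      covariant_diff_op_linear[OF covariant_diff_op[OF that] y y', of c]
    by (simp add: algebra_simps)
  then show ?thesis
    by (simp add: bracket_def fun_eq_iff sum.distrib scaleR_sum_right)
qed

lemma bracket_scaleR_add_right:
  assumes "y \<in> G" "z \<in> G" "z' \<in> G"
  shows "bracket y (\<lambda>p. c *\<^sub>R z p + z' p) = (\<lambda>p. c *\<^sub>R bracket y z p + bracket y z' p)"
  using bracket_scaleR_add_left[OF assms(2,3,1), of c]
  by (subst (1 2 3) bracket_skew) (simp add: fun_eq_iff)

lemma bracket_smul_right:
  assumes f: "f \<in> C" and y: "y \<in> G" and z: "z \<in> G"
  shows "bracket y (smul f z) = (\<lambda>p. f p *\<^sub>R bracket y z p + anchor y f p *\<^sub>R z p)"
proof -
  have "\<xi> i y p *\<^sub>R X i (smul f z) p - \<xi> i (smul f z) p *\<^sub>R X i y p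
      = f p *\<^sub>R (\<xi> i y p *\<^sub>R X i z p - \<xi> i z p *\<^sub>R X i y p) + (\<xi> i y p * xh i f p) *\<^sub>R z p"
    if "i < n" for i p
    unfolding smul_def covariant_diff_op_scaleR[OF covariant_diff_op[OF that] f z]
      dual_section_scaleR[OF smooth_algebra section_module dual_section[OF that] f z]
    by (simp add: algebra_simps)
  then show ?thesis
    by (simp add: bracket_def anchor_def fun_eq_iff sum.distrib scaleR_sum_right scaleR_sum_left)
qed

lemma anchor_vector_field: "y \<in> G \<Longrightarrow> vector_field C (anchor y)"
  unfolding anchor_def[abs_def]
  by (rule vector_field_combination[OF smooth_algebra]) (auto simp: coordinate_mem symbol_vector_field)

lemma anchor_scaleR_add:
  assumes f: "f \<in> C" and y: "y \<in> G" and z: "z \<in> G"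
  shows "anchor (\<lambda>p. f p *\<^sub>R y p + z p) g p = f p * anchor y g p + anchor z g p"
proof -
  have "\<xi> i (\<lambda>p. f p *\<^sub>R y p + z p) p * xh i g p = f p * (\<xi> i y p * xh i g p) + \<xi> i z p * xh i g p"
    if "i < n" for i
    using dual_section_scaleR_add[OF dual_section[OF that] f y z] by (simp add: algebra_simps)
  then show ?thesis
    by (simp add: anchor_def sum.distrib sum_distrib_left)
qed

lemma dual_section_bracket:
  assumes \<eta>: "dual_section C G \<eta>" and y: "y \<in> G" and z: "z \<in> G"
  shows "\<eta> (bracket y z) p = (\<Sum>i<n. \<xi> i y p * \<eta> (X i z) p - \<xi> i z p * \<eta> (X i y) p)"
proof -
  have terms_mem: "(\<lambda>p. \<xi> i w p *\<^sub>R X i w' p) \<in> G" if "i < n" "w \<in> G" "w' \<in> G" for i w w'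
    using that coordinate_mem operator_mem by (intro section_module_scaleR[OF section_module]) auto
  have "\<eta> (bracket y z) = (\<lambda>p. \<Sum>i<n. \<eta> (\<lambda>p. \<xi> i y p *\<^sub>R X i z p - \<xi> i z p *\<^sub>R X i y p) p)"
    unfolding bracket_def[abs_def] using y z terms_mem
    by (intro dual_section_sum[OF smooth_algebra section_module \<eta>]
        section_module_diff[OF smooth_algebra section_module]) auto
  also have "\<dots> = (\<lambda>p. \<Sum>i<n. \<xi> i y p * \<eta> (X i z) p - \<xi> i z p * \<eta> (X i y) p)"
    using y z terms_mem coordinate_mem operator_mem
    by (simp add: dual_section_diff[OF smooth_algebra \<eta>] dual_section_scaleR[OF smooth_algebra section_module \<eta>])
  finally show ?thesis by simp
qed

lemma anchor_anchor:
  assumes y: "y \<in> G" and z: "z \<in> G" and g: "g \<in> C"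
  shows "anchor y (anchor z g) p
    = (\<Sum>j<n. \<xi> j z p * anchor y (xh j g) p + xh j g p * anchor y (\<xi> j z) p)"
proof -
  have "anchor y (anchor z g) = (\<lambda>p. \<Sum>j<n. anchor y (\<lambda>p. \<xi> j z p * xh j g p) p)"
    unfolding anchor_def[of z g, abs_def] using z g coordinate_mem symbol_mem
    by (intro vector_field_sum[OF smooth_algebra anchor_vector_field[OF y]] smooth_algebra_mult[OF smooth_algebra])
      auto
  also have "\<dots> = (\<lambda>p. \<Sum>j<n. \<xi> j z p * anchor y (xh j g) p + xh j g p * anchor y (\<xi> j z) p)"
    using z g coordinate_mem symbol_mem
    by (simp add: vector_field_mult[OF anchor_vector_field[OF y]])
  finally show ?thesis by simp
qed

lemma lie_bracket_anchor:
  assumes y: "y \<in> G" and z: "z \<in> G" and g: "g \<in> C"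
  shows "lie_bracket (anchor y) (anchor z) g p
    = (\<Sum>j<n. (anchor y (\<xi> j z) p - anchor z (\<xi> j y) p) * xh j g p)
      + (\<Sum>i<n. \<Sum>j<n. \<xi> i y p * \<xi> j z p * lie_bracket (xh i) (xh j) g p)"
proof -
  have "(\<Sum>j<n. \<xi> j z p * anchor y (xh j g) p - \<xi> j y p * anchor z (xh j g) p)
      = (\<Sum>j<n. \<Sum>i<n. \<xi> i y p * \<xi> j z p * xh i (xh j g) p)
        - (\<Sum>j<n. \<Sum>i<n. \<xi> j y p * \<xi> i z p * xh i (xh j g) p)"
    by (simp add: anchor_def sum_distrib_left sum_subtractf ac_simps)
  also have "\<dots> = (\<Sum>i<n. \<Sum>j<n. \<xi> i y p * \<xi> j z p * lie_bracket (xh i) (xh j) g p)"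
    by (subst (1) sum.swap) (simp add: lie_bracket_def sum_subtractf right_diff_distrib)
  finally show ?thesis
    using anchor_anchor[OF y z g] anchor_anchor[OF z y g]
    by (simp add: lie_bracket_def[of "anchor y"] sum_subtractf algebra_simps sum.distrib)
qed

end

locale covariant_frame_coefficients = covariant_frame C G n \<xi> X xh
  for C :: "('m \<Rightarrow> real) set"
    and G :: "('m \<Rightarrow> 'v::real_vector) set"
    and n :: nat
    and \<xi> :: "nat \<Rightarrow> ('m \<Rightarrow> 'v) \<Rightarrow> ('m \<Rightarrow> real)"
    and X :: "nat \<Rightarrow> ('m \<Rightarrow> 'v) \<Rightarrow> ('m \<Rightarrow> 'v)"
    and xh :: "nat \<Rightarrow> ('m \<Rightarrow> real) \<Rightarrow> ('m \<Rightarrow> real)" +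
  fixes a :: "nat \<Rightarrow> nat \<Rightarrow> nat \<Rightarrow> ('m \<Rightarrow> real)"
  assumes dual_action_frame: "i < n \<Longrightarrow> j < n \<Longrightarrow> y \<in> G \<Longrightarrow>
      dual_action (X i) (xh i) (\<xi> j) y = (\<lambda>p. \<Sum>k<n. a i k j p * \<xi> k y p)"
    and lie_bracket_symbols: "i < n \<Longrightarrow> j < n \<Longrightarrow>
      vf_eq C (lie_bracket (xh i) (xh j)) (\<lambda>f p. \<Sum>k<n. (a j i k p - a i j k p) * xh k f p)"
begin

lemma coordinate_bracket:
  assumes j: "j < n" and y: "y \<in> G" and z: "z \<in> G"
  shows "\<xi> j (bracket y z) p = anchor y (\<xi> j z) p - anchor z (\<xi> j y) p
    + (\<Sum>i<n. \<Sum>k<n. (\<xi> i z p * \<xi> k y p - \<xi> i y p * \<xi> k z p) * a i k j p)"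
proof -
  have X_coordinate: "\<xi> j (X i w) p = xh i (\<xi> j w) p - (\<Sum>k<n. a i k j p * \<xi> k w p)"
    if "i < n" "w \<in> G" for i w
    using fun_cong[OF dual_action_frame[OF that(1) j that(2)], of p] by (simp add: dual_action_def)
  have "\<xi> j (bracket y z) p = (\<Sum>i<n. \<xi> i y p * \<xi> j (X i z) p - \<xi> i z p * \<xi> j (X i y) p)"
    by (rule dual_section_bracket[OF dual_section[OF j] y z])
  also have "\<dots> = (\<Sum>i<n. \<xi> i y p * xh i (\<xi> j z) p - \<xi> i z p * xh i (\<xi> j y) p
      + (\<Sum>k<n. (\<xi> i z p * \<xi> k y p - \<xi> i y p * \<xi> k z p) * a i k j p))"
    using y z by (intro sum.cong refl)
      (simp add: X_coordinate sum_distrib_left sum_subtractf algebra_simps)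
  finally show ?thesis
    by (simp add: anchor_def sum.distrib sum_subtractf)
qed

lemma anchor_bracket:
  assumes y: "y \<in> G" and z: "z \<in> G"
  shows "vf_eq C (anchor (bracket y z)) (lie_bracket (anchor y) (anchor z))"
  unfolding vf_eq_def
proof (intro ballI ext)
  fix g p assume g: "g \<in> C"
  have "anchor (bracket y z) g p
      = (\<Sum>j<n. (anchor y (\<xi> j z) p - anchor z (\<xi> j y) p) * xh j g p)
        + (\<Sum>j<n. (\<Sum>i<n. \<Sum>k<n. (\<xi> i z p * \<xi> k y p - \<xi> i y p * \<xi> k z p) * a i k j p) * xh j g p)"
    by (simp add: anchor_def[of "bracket y z"] coordinate_bracket y z distrib_right sum.distrib)
  also have "\<dots> = (\<Sum>j<n. (anchor y (\<xi> j z) p - anchor z (\<xi> j y) p) * xh j g p)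
      + (\<Sum>i<n. \<Sum>j<n. \<xi> i y p * \<xi> j z p * (\<Sum>k<n. (a j i k p - a i j k p) * xh k g p))"
    by (simp only: sum_structure_constants)
  also have "\<dots> = lie_bracket (anchor y) (anchor z) g p"
    using lie_bracket_symbols g by (simp add: lie_bracket_anchor y z vf_eq_def)
  finally show "anchor (bracket y z) g p = lie_bracket (anchor y) (anchor z) g p" .
qed

lemma dull_algebroid: "dull_algebroid C G bracket anchor"
  unfolding dull_algebroid_def
  by (intro conjI ballI allI bracket_mem bracket_skew bracket_scaleR_add_left bracket_scaleR_add_right
      anchor_vector_field bracket_smul_right anchor_bracket)
    (simp_all add: vf_eq_def fun_eq_iff anchor_scaleR_add)

end

theorem proposition2p10:
  fixes C :: "('m \<Rightarrow> real) set"
    and G :: "('m \<Rightarrow> 'v::real_vector) set"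
    and n :: nat
    and \<xi> :: "nat \<Rightarrow> ('m \<Rightarrow> 'v) \<Rightarrow> ('m \<Rightarrow> real)"
    and X :: "nat \<Rightarrow> ('m \<Rightarrow> 'v) \<Rightarrow> ('m \<Rightarrow> 'v)"
    and xh :: "nat \<Rightarrow> ('m \<Rightarrow> real) \<Rightarrow> ('m \<Rightarrow> real)"
    and a :: "nat \<Rightarrow> nat \<Rightarrow> nat \<Rightarrow> ('m \<Rightarrow> real)"
  assumes C: "smooth_algebra C"
    and G: "section_module C G"
    and xi: "\<forall>i<n. dual_section C G (\<xi> i)"
    and indep: "lin_indep_dual C G n \<xi>"
    and X: "\<forall>i<n. covariant_diff_op C G (X i) (xh i)"
    and a_smooth: "\<forall>i<n. \<forall>k<n. \<forall>j<n. a i k j \<in> C"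
    and Xxi: "\<forall>i<n. \<forall>j<n. \<forall>y\<in>G.
               dual_action (X i) (xh i) (\<xi> j) y = (\<lambda>p. \<Sum>k<n. a i k j p * \<xi> k y p)"
    and brx: "\<forall>i<n. \<forall>j<n. vf_eq C (lie_bracket (xh i) (xh j))
               (\<lambda>f p. \<Sum>k<n. (a j i k p - a i j k p) * xh k f p)"
  shows "dull_algebroid C G
           (\<lambda>y z p. \<Sum>i<n. \<xi> i y p *\<^sub>R X i z p - \<xi> i z p *\<^sub>R X i y p)
           (\<lambda>y f p. \<Sum>i<n. \<xi> i y p * xh i f p)"
proof -
  interpret covariant_frame_coefficients C G n \<xi> X xh a
    using C G xi X Xxi brx by unfold_locales auto
  show ?thesis
    using dull_algebroid unfolding bracket_def[abs_def] anchor_def[abs_def] .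
qed

end
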